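(* Let $V$ be a real vector space with a symplectic form $\sigma$, let $\mathcal{L}(V)$ be the lattice of all linear subspaces of $V$ with symplectic complementation, and let $\mu:\mathcal{L}(V)\to[0,1]$ be a finitely additive probability measure. Let $H\in\mathcal{L}(V)$. (a) For every decomposition $H=Z(H)\oplus_\sigma K$, where $Z(H)=H\cap H'$ and $K\subset H$ is a subspace with $Z(H)\subset K'$ and $Z(H)\cap K=\{0\}$, one has $\mu(H)=\mu(K)$. (b) If $H$ is symplectic and $H=H_1\oplus_\sigma\cdots\oplus_\sigma H_n$ with symplectic planes $H_k$ satisfying $H_i\subset H_j'$ for $i\ne j$, then $\mu(H)=\sum_{k=1}^n\mu(H_k)$.
   Context: A symplectic form is a bilinear, antisymmetric, non-degenerate map $\sigma:V\times V\to\mathbb{R}$. For a subspace $H$, $H'=\{v\in V:\sigma(v,h)=0\ \forall h\in H\}$. $\mathcal{L}(V)$ is ordered by inclusion, with $H\vee K=H+K$ (no closure), $H\wedge K=H\cap K$, $0=\{0\}$, $1=V$. $H,K$ are separated if $H\subset K'$. $\oplus_\sigma$ denotes an algebraic direct sum of mutually separated subspaces. $H$ is symplectic if $H\cap H'=\{0\}$; a symplectic plane is a two-dimensional symplectic subspace. A finitely additive probability measure on $\mathcal{L}(V)$ is a map $\mu$ into $[0,1]$ with $\mu(\{0\})=0$, $\mu(V)=1$, monotone ($H\subset K\Rightarrow\mu(H)\le\mu(K)$), and $\mu(H_1+\dots+H_n)=\sum_k\mu(H_k)$ whenever $H_1,\dots,H_n$ are pairwise separated. *)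

theory Defs
  imports "HOL-Analysis.Analysis"
begin

definition symplectic_form :: "('v::real_vector \<Rightarrow> 'v \<Rightarrow> real) \<Rightarrow> bool" where
  "symplectic_form \<sigma> \<longleftrightarrow>
     (\<forall>w. linear (\<lambda>v. \<sigma> v w)) \<and> (\<forall>v. linear (\<lambda>w. \<sigma> v w)) \<and>
     (\<forall>v w. \<sigma> v w = - \<sigma> w v) \<and>
     (\<forall>v. (\<forall>w. \<sigma> v w = 0) \<longrightarrow> v = 0)"

definition scompl :: "('v \<Rightarrow> 'v \<Rightarrow> real) \<Rightarrow> 'v set \<Rightarrow> 'v set" where
  "scompl \<sigma> H = {v. \<forall>h\<in>H. \<sigma> v h = 0}"

definition separated :: "('v \<Rightarrow> 'v \<Rightarrow> real) \<Rightarrow> 'v set \<Rightarrow> 'v set \<Rightarrow> bool" where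
  "separated \<sigma> H K \<longleftrightarrow> H \<subseteq> scompl \<sigma> K"

definition ssum :: "nat \<Rightarrow> (nat \<Rightarrow> 'v::real_vector set) \<Rightarrow> 'v set" where
  "ssum n H = {\<Sum>k<n. v k | v. \<forall>k<n. v k \<in> H k}"

definition direct_sum :: "nat \<Rightarrow> (nat \<Rightarrow> 'v::real_vector set) \<Rightarrow> bool" where
  "direct_sum n H \<longleftrightarrow>
     (\<forall>v. (\<forall>k<n. v k \<in> H k) \<and> (\<Sum>k<n. v k) = 0 \<longrightarrow> (\<forall>k<n. v k = 0))"

definition symplectic_subspace :: "('v::real_vector \<Rightarrow> 'v \<Rightarrow> real) \<Rightarrow> 'v set \<Rightarrow> bool" where
  "symplectic_subspace \<sigma> H \<longleftrightarrow> subspace H \<and> H \<inter> scompl \<sigma> H = {0}"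

definition symplectic_plane :: "('v::real_vector \<Rightarrow> 'v \<Rightarrow> real) \<Rightarrow> 'v set \<Rightarrow> bool" where
  "symplectic_plane \<sigma> H \<longleftrightarrow> symplectic_subspace \<sigma> H \<and> dim H = 2"

definition fa_prob_measure :: "('v::real_vector \<Rightarrow> 'v \<Rightarrow> real) \<Rightarrow> ('v set \<Rightarrow> real) \<Rightarrow> bool" where
  "fa_prob_measure \<sigma> \<mu> \<longleftrightarrow>
     (\<forall>H. subspace H \<longrightarrow> 0 \<le> \<mu> H \<and> \<mu> H \<le> 1) \<and>
     \<mu> {0} = 0 \<and> \<mu> UNIV = 1 \<and>
     (\<forall>H K. subspace H \<and> subspace K \<and> H \<subseteq> K \<longrightarrow> \<mu> H \<le> \<mu> K) \<and>
     (\<forall>n Hs. (\<forall>k<n. subspace (Hs k)) \<and>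
             (\<forall>i<n. \<forall>j<n. i \<noteq> j \<longrightarrow> separated \<sigma> (Hs i) (Hs j))
             \<longrightarrow> \<mu> (ssum n Hs) = (\<Sum>k<n. \<mu> (Hs k)))"

end

theory Submission
  imports Defs
begin

text \<open>The radical Z(H) = H \<inter> H' is isotropic, so finite additivity applied to Z(H) + Z(H) = Z(H)
  forces \<mu>(Z(H)) = 0; additivity for the separated pair Z(H), K then gives \<mu>(H) = \<mu>(K).
  Part (b) is finite additivity for the pairwise separated planes.\<close>

lemma symplectic_form_linear_left:
  "symplectic_form \<sigma> \<Longrightarrow> linear (\<lambda>v. \<sigma> v w)"
  unfolding symplectic_form_def by (elim conjE allE)

lemma symplectic_form_antisym:
  "symplectic_form \<sigma> \<Longrightarrow> \<sigma> v w = - \<sigma> w v"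
  unfolding symplectic_form_def by (elim conjE allE)

lemma scompl_subspace:
  assumes "\<And>w. linear (\<lambda>v. \<sigma> v w)"
  shows "subspace (scompl \<sigma> H)"
  unfolding subspace_def scompl_def
  using linear_0[OF assms] linear_add[OF assms] linear_scale[OF assms] by simp

lemma separated_sym:
  assumes "\<And>v w. \<sigma> v w = - \<sigma> w v" and "separated \<sigma> A B"
  shows "separated \<sigma> B A"
  unfolding separated_def scompl_def
proof (intro subsetI CollectI ballI)
  fix b a assume "b \<in> B" "a \<in> A"
  then have "\<sigma> a b = 0" using assms(2) unfolding separated_def scompl_def by blast
  then show "\<sigma> b a = 0" using assms(1)[of b a] by simp
qed

lemma subspace_plus_self: "subspace Z \<Longrightarrow> Z + Z = Z"
proof
  assume Z: "subspace Z"
  then show "Z + Z \<subseteq> Z" by (auto simp: set_plus_def subspace_add)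
  show "Z \<subseteq> Z + Z"
  proof
    fix z assume "z \<in> Z"
    then have "z + 0 \<in> Z + Z" using Z by (intro set_plus_intro) (auto simp: subspace_0)
    then show "z \<in> Z + Z" by simp
  qed
qed

lemma ssum_two: "ssum 2 Hs = Hs 0 + Hs 1"
proof
  show "ssum 2 Hs \<subseteq> Hs 0 + Hs 1"
  proof
    fix x assume "x \<in> ssum 2 Hs"
    then obtain v where v: "\<forall>k<2. v k \<in> Hs k" and x: "x = (\<Sum>k<2. v k)"
      unfolding ssum_def by blast
    have "x = v 0 + v 1" using x by (simp add: numeral_2_eq_2 lessThan_Suc add.commute)
    then show "x \<in> Hs 0 + Hs 1" using v by (auto intro: set_plus_intro)
  qed
  show "Hs 0 + Hs 1 \<subseteq> ssum 2 Hs"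
  proof
    fix x assume "x \<in> Hs 0 + Hs 1"
    then obtain a b where "a \<in> Hs 0" "b \<in> Hs 1" "x = a + b" by (auto simp: set_plus_def)
    moreover define v where "v = (\<lambda>k::nat. if k = 0 then a else b)"
    ultimately have "x = (\<Sum>k<2. v k)" and "\<forall>k<2. v k \<in> Hs k"
      by (auto simp: v_def numeral_2_eq_2 lessThan_Suc less_Suc_eq)
    then show "x \<in> ssum 2 Hs" unfolding ssum_def by blast
  qed
qed

lemma fa_prob_measure_ssum:
  assumes "fa_prob_measure \<sigma> \<mu>" "\<forall>k<n. subspace (Hs k)"
    and "\<forall>i<n. \<forall>j<n. i \<noteq> j \<longrightarrow> separated \<sigma> (Hs i) (Hs j)"
  shows "\<mu> (ssum n Hs) = (\<Sum>k<n. \<mu> (Hs k))"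
  using assms unfolding fa_prob_measure_def by blast

lemma fa_prob_measure_plus:
  assumes "fa_prob_measure \<sigma> \<mu>" "subspace A" "subspace B"
    and "separated \<sigma> A B" "separated \<sigma> B A"
  shows "\<mu> (A + B) = \<mu> A + \<mu> B"
proof -
  define Hs where "Hs = (\<lambda>k::nat. if k = 0 then A else B)"
  have "\<mu> (A + B) = \<mu> (ssum 2 Hs)" by (simp add: ssum_two Hs_def)
  also have "\<dots> = (\<Sum>k<2. \<mu> (Hs k))"
    using assms by (intro fa_prob_measure_ssum) (auto simp: Hs_def numeral_2_eq_2 less_Suc_eq)
  also have "\<dots> = \<mu> A + \<mu> B" by (simp add: Hs_def numeral_2_eq_2)
  finally show ?thesis .
qed

lemma fa_prob_measure_isotropic_eq_0:
  assumes "fa_prob_measure \<sigma> \<mu>" "subspace Z" "separated \<sigma> Z Z"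
  shows "\<mu> Z = 0"
  using fa_prob_measure_plus[OF assms(1,2,2,3,3)] subspace_plus_self[OF assms(2)] by simp

lemma fa_prob_measure_plus_isotropic:
  assumes "symplectic_form \<sigma>" "fa_prob_measure \<sigma> \<mu>" "subspace Z" "subspace K"
    and "separated \<sigma> Z Z" "separated \<sigma> Z K"
  shows "\<mu> (Z + K) = \<mu> K"
proof -
  have "separated \<sigma> K Z"
    using symplectic_form_antisym[OF assms(1)] assms(6) by (rule separated_sym)
  then show ?thesis
    using fa_prob_measure_plus[OF assms(2-4,6)] fa_prob_measure_isotropic_eq_0[OF assms(2,3,5)] by simp
qed

theorem lemmaB1:
  fixes \<sigma> :: "'v::real_vector \<Rightarrow> 'v \<Rightarrow> real" and \<mu> :: "'v set \<Rightarrow> real" and H :: "'v set"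
  assumes "symplectic_form \<sigma>"
    and "fa_prob_measure \<sigma> \<mu>"
    and "subspace H"
  shows "(\<forall>K. subspace K \<and> K \<subseteq> H \<and>
              H \<inter> scompl \<sigma> H \<subseteq> scompl \<sigma> K \<and>
              (H \<inter> scompl \<sigma> H) \<inter> K = {0} \<and>
              H = (H \<inter> scompl \<sigma> H) + K
           \<longrightarrow> \<mu> H = \<mu> K)
       \<and> (\<forall>n Hs. symplectic_subspace \<sigma> H \<and>
              (\<forall>k<n. symplectic_plane \<sigma> (Hs k)) \<and>
              (\<forall>i<n. \<forall>j<n. i \<noteq> j \<longrightarrow> Hs i \<subseteq> scompl \<sigma> (Hs j)) \<and>
              direct_sum n Hs \<and> H = ssum n Hs
           \<longrightarrow> \<mu> H = (\<Sum>k<n. \<mu> (Hs k)))"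
proof (intro conjI allI impI; elim conjE)
  fix K
  assume "subspace K" "K \<subseteq> H" "H \<inter> scompl \<sigma> H \<subseteq> scompl \<sigma> K"
    "(H \<inter> scompl \<sigma> H) \<inter> K = {0}" "H = (H \<inter> scompl \<sigma> H) + K"
  define Z where "Z = H \<inter> scompl \<sigma> H"
  have "subspace Z" unfolding Z_def
    using assms(3) scompl_subspace[OF symplectic_form_linear_left[OF assms(1)]] by (rule subspace_inter)
  have "separated \<sigma> Z Z" unfolding separated_def scompl_def Z_def by blast
  have "separated \<sigma> Z K" unfolding separated_def Z_def by fact
  have "H = Z + K" unfolding Z_def by fact
  then show "\<mu> H = \<mu> K"
    using fa_prob_measure_plus_isotropic[OF assms(1,2) \<open>subspace Z\<close> \<open>subspace K\<close>
        \<open>separated \<sigma> Z Z\<close> \<open>separated \<sigma> Z K\<close>] by simp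
next
  fix n Hs
  assume "symplectic_subspace \<sigma> H" "\<forall>k<n. symplectic_plane \<sigma> (Hs k)"
    "\<forall>i<n. \<forall>j<n. i \<noteq> j \<longrightarrow> Hs i \<subseteq> scompl \<sigma> (Hs j)"
    "direct_sum n Hs" "H = ssum n Hs"
  moreover from this(2) have "\<forall>k<n. subspace (Hs k)"
    unfolding symplectic_plane_def symplectic_subspace_def by blast
  ultimately show "\<mu> H = (\<Sum>k<n. \<mu> (Hs k))"
    using fa_prob_measure_ssum[OF assms(2)] unfolding separated_def by simp
qed

end
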